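(* Let $(X,m)$, $X=\{x_1,\ldots,x_n\}\subset\mathbb{R}^N$, be a configuration of particles with nonzero masses, exponent $a\neq0$ and nonzero total mass $\mu_0$. Then $(X,m)$ is a central configuration if and only if there exists $\lambda\in\mathbb{R}$ such that, with $S_{ij}=s_{ij}^a-\lambda/\mu_0$ for $i\neq j$ and $S_{jj}=-\frac{1}{m_j}\sum_{i\neq j}m_iS_{ij}$, \[\sum_{i=1}^n\sum_{k=1}^n m_im_kS_{ij}S_{kl}s_{ik}=0\quad\text{for all } j,l=1,\ldots,n.\]
   Context: $s_{ij}=\overrightarrow{x_ix_j}^2$ (so $s_{ii}=0$). Accelerations are $\overrightarrow{\gamma}_j=-\sum_{i\neq j}m_is_{ij}^a\overrightarrow{x_ix_j}$, and $(X,m)$ is central if there exist a vector $\overrightarrow{\gamma}_O$, a point $x_O$ and a real $\lambda$ with $\overrightarrow{\gamma}_j-\overrightarrow{\gamma}_O=\lambda\overrightarrow{x_Ox_j}$ for all $j$. *)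

theory Defs
  imports "HOL-Analysis.Analysis"
begin

definition sq_dist :: "(nat \<Rightarrow> 'a::euclidean_space) \<Rightarrow> nat \<Rightarrow> nat \<Rightarrow> real" where
  "sq_dist x i j = (norm (x j - x i))^2"

definition accel :: "real \<Rightarrow> nat \<Rightarrow> (nat \<Rightarrow> real) \<Rightarrow> (nat \<Rightarrow> 'a::euclidean_space) \<Rightarrow> nat \<Rightarrow> 'a" where
  "accel a n m x j = - (\<Sum>i\<in>{..<n} - {j}. (m i * (sq_dist x i j powr a)) *\<^sub>R (x j - x i))"

definition central_config :: "real \<Rightarrow> nat \<Rightarrow> (nat \<Rightarrow> real) \<Rightarrow> (nat \<Rightarrow> 'a::euclidean_space) \<Rightarrow> bool" where
  "central_config a n m x \<longleftrightarrow>
     (\<exists>(\<gamma>O::'a) (xO::'a) (lam::real). \<forall>j<n. accel a n m x j - \<gamma>O = lam *\<^sub>R (x j - xO))"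

definition total_mass :: "nat \<Rightarrow> (nat \<Rightarrow> real) \<Rightarrow> real" where
  "total_mass n m = (\<Sum>i<n. m i)"

definition S_off :: "real \<Rightarrow> nat \<Rightarrow> (nat \<Rightarrow> real) \<Rightarrow> (nat \<Rightarrow> 'a::euclidean_space) \<Rightarrow> real \<Rightarrow> nat \<Rightarrow> nat \<Rightarrow> real" where
  "S_off a n m x lam i j = sq_dist x i j powr a - lam / total_mass n m"

definition S_mat :: "real \<Rightarrow> nat \<Rightarrow> (nat \<Rightarrow> real) \<Rightarrow> (nat \<Rightarrow> 'a::euclidean_space) \<Rightarrow> real \<Rightarrow> nat \<Rightarrow> nat \<Rightarrow> real" where
  "S_mat a n m x lam i j =
     (if i = j then - (1 / m j) * (\<Sum>k\<in>{..<n} - {j}. m k * S_off a n m x lam k j)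
      else S_off a n m x lam i j)"

end

theory Submission
  imports Defs
begin

text \<open>Every column of the matrix \<open>(m\<^sub>i S\<^sub>i\<^sub>j)\<close> sums to zero, and for weights \<open>w, u\<close> of zero
  sum the form \<open>\<Sum>\<^sub>i\<^sub>k w\<^sub>i u\<^sub>k s\<^sub>i\<^sub>k\<close> equals \<open>-2 \<langle>\<Sum> w\<^sub>i x\<^sub>i, \<Sum> u\<^sub>k x\<^sub>k\<rangle>\<close>. Hence the equations say
  that the vectors \<open>v\<^sub>j = \<Sum>\<^sub>i m\<^sub>i S\<^sub>i\<^sub>j x\<^sub>i\<close> are pairwise orthogonal, i.e. all zero. A direct
  computation gives \<open>v\<^sub>j = \<gamma>\<^sub>j + \<lambda> (x\<^sub>j - c)\<close> with \<open>c\<close> the centre of mass, while conservation of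
  momentum \<open>\<Sum> m\<^sub>j \<gamma>\<^sub>j = 0\<close> shows that a configuration is central exactly when
  \<open>\<gamma>\<^sub>j = \<lambda>' (x\<^sub>j - c)\<close> for some \<open>\<lambda>'\<close>.\<close>

definition center_of_mass :: "nat \<Rightarrow> (nat \<Rightarrow> real) \<Rightarrow> (nat \<Rightarrow> 'a::euclidean_space) \<Rightarrow> 'a" where
  "center_of_mass n m x = (1 / total_mass n m) *\<^sub>R (\<Sum>i<n. m i *\<^sub>R x i)"

lemma sq_dist_commute: "sq_dist x i j = sq_dist x j i"
  unfolding sq_dist_def by (simp add: norm_minus_commute)

lemma sum_sq_dist_eq_inner:
  fixes x :: "nat \<Rightarrow> 'a::euclidean_space"
  assumes "sum w A = 0" "sum u A = 0"
  shows "(\<Sum>i\<in>A. \<Sum>k\<in>A. w i * u k * sq_dist x i k)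
           = -2 * ((\<Sum>i\<in>A. w i *\<^sub>R x i) \<bullet> (\<Sum>k\<in>A. u k *\<^sub>R x k))"
proof -
  have sq_dist_inner: "sq_dist x i k = x i \<bullet> x i - 2 * (x i \<bullet> x k) + x k \<bullet> x k" for i k
    unfolding sq_dist_def power2_norm_eq_inner
    by (simp add: inner_diff_left inner_diff_right inner_commute)
  have "(\<Sum>i\<in>A. \<Sum>k\<in>A. w i * u k * (x i \<bullet> x i)) = (\<Sum>i\<in>A. w i * (x i \<bullet> x i) * sum u A)"
    by (intro sum.cong refl) (simp add: sum_distrib_left sum_distrib_right mult_ac)
  then have first: "(\<Sum>i\<in>A. \<Sum>k\<in>A. w i * u k * (x i \<bullet> x i)) = 0"
    using assms(2) by simp
  have last: "(\<Sum>i\<in>A. \<Sum>k\<in>A. w i * u k * (x k \<bullet> x k)) = 0"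
    using assms(1) by (simp add: sum_distrib_right[symmetric] mult.assoc sum.swap[of _ A])
  have "(\<Sum>i\<in>A. w i *\<^sub>R x i) \<bullet> (\<Sum>k\<in>A. u k *\<^sub>R x k)
      = (\<Sum>i\<in>A. (w i *\<^sub>R x i) \<bullet> (\<Sum>k\<in>A. u k *\<^sub>R x k))"
    by (rule inner_sum_left)
  also have "\<dots> = (\<Sum>i\<in>A. \<Sum>k\<in>A. w i * u k * (x i \<bullet> x k))"
    by (simp add: inner_sum_right sum_distrib_left mult_ac)
  finally have cross: "(\<Sum>i\<in>A. \<Sum>k\<in>A. w i * u k * (x i \<bullet> x k))
      = (\<Sum>i\<in>A. w i *\<^sub>R x i) \<bullet> (\<Sum>k\<in>A. u k *\<^sub>R x k)" ..
  have "(\<Sum>i\<in>A. \<Sum>k\<in>A. w i * u k * sq_dist x i k)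
      = (\<Sum>i\<in>A. \<Sum>k\<in>A. w i * u k * (x i \<bullet> x i)) - 2 * (\<Sum>i\<in>A. \<Sum>k\<in>A. w i * u k * (x i \<bullet> x k))
        + (\<Sum>i\<in>A. \<Sum>k\<in>A. w i * u k * (x k \<bullet> x k))"
    by (simp add: sq_dist_inner algebra_simps sum.distrib sum_subtractf sum_distrib_left)
  then show ?thesis
    by (simp add: first last cross)
qed

lemma accel_eq_sum_lessThan:
  "accel a n m x j = - (\<Sum>i<n. (m i * sq_dist x i j powr a) *\<^sub>R (x j - x i))"
proof -
  have "(\<Sum>i\<in>{..<n} - {j}. (m i * sq_dist x i j powr a) *\<^sub>R (x j - x i))
      = (\<Sum>i<n. (m i * sq_dist x i j powr a) *\<^sub>R (x j - x i))"
    by (rule sum.mono_neutral_left) auto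
  then show ?thesis by (simp add: accel_def)
qed

lemma double_sum_antisym_eq_0:
  fixes f :: "'i \<Rightarrow> 'i \<Rightarrow> 'b::real_vector"
  assumes "\<And>i j. f j i = - f i j"
  shows "(\<Sum>i\<in>A. \<Sum>j\<in>A. f i j) = 0"
proof -
  have "(\<Sum>i\<in>A. \<Sum>j\<in>A. f i j) = (\<Sum>j\<in>A. \<Sum>i\<in>A. f i j)"
    by (rule sum.swap)
  also have "\<dots> = (\<Sum>j\<in>A. \<Sum>i\<in>A. - f j i)"
    by (intro sum.cong refl) (rule assms)
  also have "\<dots> = - (\<Sum>i\<in>A. \<Sum>j\<in>A. f i j)"
    by (simp add: sum_negf)
  finally have "(2::real) *\<^sub>R (\<Sum>i\<in>A. \<Sum>j\<in>A. f i j) = 0"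
    by (simp add: scaleR_2 eq_neg_iff_add_eq_0)
  then show ?thesis
    by simp
qed

lemma sum_mass_accel_eq_0: "(\<Sum>j<n. m j *\<^sub>R accel a n m x j) = 0"
proof -
  define f where "f i j = (m j * m i * sq_dist x i j powr a) *\<^sub>R (x j - x i)" for i j
  have "f j i = - f i j" for i j
    unfolding f_def by (simp add: sq_dist_commute[of x i j] algebra_simps)
  then have "(\<Sum>j<n. \<Sum>i<n. f i j) = 0"
    by (rule double_sum_antisym_eq_0)
  then show ?thesis
    by (simp add: accel_eq_sum_lessThan f_def scaleR_sum_right sum_negf mult.assoc)
qed

lemma central_config_iff_center_of_mass:
  fixes x :: "nat \<Rightarrow> 'a::euclidean_space"
  assumes "total_mass n m \<noteq> 0"
  shows "central_config a n m x \<longleftrightarrow>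
    (\<exists>lam. \<forall>j<n. accel a n m x j = lam *\<^sub>R (x j - center_of_mass n m x))"
proof
  assume "central_config a n m x"
  then obtain \<gamma>O xO lam where central: "\<And>j. j < n \<Longrightarrow> accel a n m x j = \<gamma>O + lam *\<^sub>R (x j - xO)"
    unfolding central_config_def by (metis diff_eq_eq add.commute)
  let ?\<mu> = "total_mass n m"
  let ?c = "center_of_mass n m x"
  have "0 = (\<Sum>j<n. m j *\<^sub>R accel a n m x j)"
    by (simp add: sum_mass_accel_eq_0)
  also have "\<dots> = (\<Sum>j<n. m j *\<^sub>R (\<gamma>O + lam *\<^sub>R (x j - xO)))"
    by (rule sum.cong) (simp_all add: central)
  also have "\<dots> = ?\<mu> *\<^sub>R \<gamma>O + lam *\<^sub>R (\<Sum>j<n. m j *\<^sub>R x j) - (lam * ?\<mu>) *\<^sub>R xO"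
    by (simp add: total_mass_def algebra_simps sum.distrib sum_subtractf
        scaleR_sum_right scaleR_sum_left sum_distrib_left)
  also have "\<dots> = ?\<mu> *\<^sub>R (\<gamma>O + lam *\<^sub>R (?c - xO))"
    using assms by (simp add: center_of_mass_def algebra_simps)
  finally have "\<gamma>O + lam *\<^sub>R (?c - xO) = 0"
    using assms by simp
  then have "\<gamma>O = lam *\<^sub>R (xO - ?c)"
    by (metis eq_neg_iff_add_eq_0 minus_diff_eq scaleR_minus_right)
  then have "\<forall>j<n. accel a n m x j = lam *\<^sub>R (x j - ?c)"
    by (simp add: central algebra_simps)
  then show "\<exists>lam. \<forall>j<n. accel a n m x j = lam *\<^sub>R (x j - ?c)" ..
next
  assume "\<exists>lam. \<forall>j<n. accel a n m x j = lam *\<^sub>R (x j - center_of_mass n m x)"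
  then show "central_config a n m x"
    unfolding central_config_def by (metis diff_zero)
qed

lemma sum_S_mat_column_eq_0:
  assumes "j < n" "m j \<noteq> 0"
  shows "(\<Sum>i<n. m i * S_mat a n m x lam i j) = 0"
proof -
  have "(\<Sum>i<n. m i * S_mat a n m x lam i j)
      = m j * S_mat a n m x lam j j + (\<Sum>i\<in>{..<n} - {j}. m i * S_mat a n m x lam i j)"
    using assms(1) by (simp add: sum.remove)
  also have "(\<Sum>i\<in>{..<n} - {j}. m i * S_mat a n m x lam i j)
      = (\<Sum>i\<in>{..<n} - {j}. m i * S_off a n m x lam i j)"
    by (rule sum.cong) (auto simp: S_mat_def)
  finally show ?thesis
    using assms(2) by (simp add: S_mat_def)
qed

lemma sum_S_mat_column_moment:
  fixes x :: "nat \<Rightarrow> 'a::euclidean_space"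
  assumes "j < n" "m j \<noteq> 0" "total_mass n m \<noteq> 0"
  shows "(\<Sum>i<n. (m i * S_mat a n m x lam i j) *\<^sub>R x i)
           = accel a n m x j + lam *\<^sub>R (x j - center_of_mass n m x)"
proof -
  let ?w = "\<lambda>i. m i * S_mat a n m x lam i j"
  let ?\<mu> = "total_mass n m"
  have "(\<Sum>i<n. ?w i *\<^sub>R x j) = 0"
    using sum_S_mat_column_eq_0[of j n m a x lam] assms(1,2)
    by (simp flip: scaleR_sum_left)
  then have "(\<Sum>i<n. ?w i *\<^sub>R x i) = (\<Sum>i<n. ?w i *\<^sub>R (x i - x j))"
    by (simp add: scaleR_diff_right sum_subtractf)
  also have "\<dots> = (\<Sum>i\<in>{..<n} - {j}. ?w i *\<^sub>R (x i - x j))"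
    by (rule sum.mono_neutral_right) auto
  also have "\<dots> = (\<Sum>i\<in>{..<n} - {j}. (m i * sq_dist x i j powr a) *\<^sub>R (x i - x j)
                   - (lam / ?\<mu>) *\<^sub>R (m i *\<^sub>R (x i - x j)))"
    by (rule sum.cong) (auto simp: S_mat_def S_off_def algebra_simps)
  also have "\<dots> = (\<Sum>i\<in>{..<n} - {j}. (m i * sq_dist x i j powr a) *\<^sub>R (x i - x j))
                 - (lam / ?\<mu>) *\<^sub>R (\<Sum>i\<in>{..<n} - {j}. m i *\<^sub>R (x i - x j))"
    by (simp add: sum_subtractf scaleR_sum_right)
  also have "(\<Sum>i\<in>{..<n} - {j}. m i *\<^sub>R (x i - x j)) = (\<Sum>i<n. m i *\<^sub>R (x i - x j))"
    by (rule sum.mono_neutral_left) auto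
  also have "\<dots> = ?\<mu> *\<^sub>R (center_of_mass n m x - x j)"
    using assms(3)
    by (simp add: center_of_mass_def total_mass_def scaleR_diff_right sum_subtractf scaleR_sum_left)
  also have "(\<Sum>i\<in>{..<n} - {j}. (m i * sq_dist x i j powr a) *\<^sub>R (x i - x j)) = accel a n m x j"
    by (simp add: accel_def scaleR_diff_right flip: sum_negf)
  finally show ?thesis
    using assms(3) by (simp add: algebra_simps)
qed

lemma S_mat_quadratic_form:
  fixes x :: "nat \<Rightarrow> 'a::euclidean_space"
  assumes "j < n" "l < n" "m j \<noteq> 0" "m l \<noteq> 0"
  shows "(\<Sum>i<n. \<Sum>k<n. m i * m k * S_mat a n m x lam i j * S_mat a n m x lam k l * sq_dist x i k)
           = -2 * ((\<Sum>i<n. (m i * S_mat a n m x lam i j) *\<^sub>R x i)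
                   \<bullet> (\<Sum>k<n. (m k * S_mat a n m x lam k l) *\<^sub>R x k))"
  using sum_sq_dist_eq_inner[where w = "\<lambda>i. m i * S_mat a n m x lam i j"
      and u = "\<lambda>k. m k * S_mat a n m x lam k l" and A = "{..<n}" and x = x]
    sum_S_mat_column_eq_0[of j n m a x lam] sum_S_mat_column_eq_0[of l n m a x lam] assms
  by (simp add: mult_ac)

lemma S_mat_equations_iff_accel:
  fixes x :: "nat \<Rightarrow> 'a::euclidean_space"
  assumes "\<forall>i<n. m i \<noteq> 0" "total_mass n m \<noteq> 0"
  shows "(\<forall>j<n. \<forall>l<n.
           (\<Sum>i<n. \<Sum>k<n. m i * m k * S_mat a n m x lam i j * S_mat a n m x lam k l * sq_dist x i k) = 0)
         \<longleftrightarrow> (\<forall>j<n. accel a n m x j = (- lam) *\<^sub>R (x j - center_of_mass n m x))"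
proof -
  define v where "v j = (\<Sum>i<n. (m i * S_mat a n m x lam i j) *\<^sub>R x i)" for j
  have "(\<forall>j<n. \<forall>l<n.
           (\<Sum>i<n. \<Sum>k<n. m i * m k * S_mat a n m x lam i j * S_mat a n m x lam k l * sq_dist x i k) = 0)
         \<longleftrightarrow> (\<forall>j<n. \<forall>l<n. v j \<bullet> v l = 0)"
    using assms(1) by (simp add: S_mat_quadratic_form v_def)
  also have "\<dots> \<longleftrightarrow> (\<forall>j<n. v j = 0)"
    by (metis inner_eq_zero_iff inner_zero_left)
  also have "\<dots> \<longleftrightarrow> (\<forall>j<n. accel a n m x j = (- lam) *\<^sub>R (x j - center_of_mass n m x))"
    using sum_S_mat_column_moment[where x = x and n = n and m = m and a = a and lam = lam] assms
    by (auto simp: v_def eq_neg_iff_add_eq_0)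
  finally show ?thesis .
qed

theorem corollaryB1:
  fixes x :: "nat \<Rightarrow> 'a::euclidean_space" and m :: "nat \<Rightarrow> real" and a :: real and n :: nat
  assumes "inj_on x {..<n}"
    and "\<forall>i<n. m i \<noteq> 0"
    and "a \<noteq> 0"
    and "total_mass n m \<noteq> 0"
  shows "central_config a n m x \<longleftrightarrow>
    (\<exists>lam::real. \<forall>j<n. \<forall>l<n.
       (\<Sum>i<n. \<Sum>k<n. m i * m k * S_mat a n m x lam i j * S_mat a n m x lam k l * sq_dist x i k) = 0)"
proof -
  show ?thesis
    unfolding central_config_iff_center_of_mass[OF assms(4)] S_mat_equations_iff_accel[OF assms(2,4)]
    by (metis minus_minus)
qed

end
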